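(* There is an absolute constant $C>0$ such that the following holds. Let $n,d,k\ge 1$, let $\phi:\mathbb{R}\to\mathbb{R}$ be $L$-Lipschitz with $\phi(0)=0$, let $b>0$, and let $x_1,\dots,x_n,x'_1,\dots,x'_n\in\mathbb{R}^d$ satisfy $\|x_i\|_2\le b$ and $\|x'_i\|_2\le b$ for all $i$. For $a,a'>0$ let $\mathcal{J}^k_{a,a'}=\{A\in\mathbb{R}^{d\times k} : \|A\|_{2,1}\le a,\ \|A\|_{op}\le a'\}$. Then $$\widehat{\mathfrak{R}}\big(\mathcal{F}_k(\mathcal{J}^k_{a,a'})\big)\le C\left(\frac1n+\frac{a\,a'\,b^2L^2}{k\sqrt n}\sqrt{\log(2dk)}\,\log\Big(2+\frac{n\,b^2a'^2L^2}{k}\Big)\right).$$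
   Context: For $A\in\mathbb{R}^{d\times k}$ with columns $A_{\cdot 1},\dots,A_{\cdot k}$: $\|A\|_{2,1}=\sum_{j=1}^k\|A_{\cdot j}\|_2$, $\|A\|_{2,\infty}=\max_{j\le k}\|A_{\cdot j}\|_2$, and $\|A\|_{op}$ is the spectral norm. For $u,v\in\mathbb{R}^k$, $\zeta_k(u,v)=\frac1k\|u-v\|_2^2$. The function $\phi$ is applied coordinatewise to vectors. Given fixed points $x_1,\dots,x_n,x'_1,\dots,x'_n\in\mathbb{R}^d$ and a set $\mathcal{G}\subset\mathbb{R}^{d\times k}$, define $\mathcal{F}_k(\mathcal{G})=\{(\zeta_k(\phi(A^tx_i),\phi(A^tx'_i)))_{i=1}^n : A\in\mathcal{G}\}\subset\mathbb{R}^n$. For a set $\mathcal{F}\subset\mathbb{R}^n$, the empirical Rademacher complexity is $\widehat{\mathfrak{R}}(\mathcal{F})=\frac1n\mathbb{E}_\varepsilon\sup_{f\in\mathcal{F}}\sum_{i=1}^n\varepsilon_if_i$, where $\varepsilon_1,\dots,\varepsilon_n$ are i.i.d. uniform on $\{-1,1\}$. *)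

theory Defs
  imports "HOL-Analysis.Analysis"
begin

(* Vectors in R^m are represented as functions nat => real, only indices < m matter.
   Matrices in R^{d x k} are functions nat => nat => real, A i j with i < d, j < k. *)

definition vnorm :: "nat \<Rightarrow> (nat \<Rightarrow> real) \<Rightarrow> real" where
  "vnorm m v = sqrt (\<Sum>i<m. (v i)\<^sup>2)"

definition matT_apply :: "nat \<Rightarrow> (nat \<Rightarrow> nat \<Rightarrow> real) \<Rightarrow> (nat \<Rightarrow> real) \<Rightarrow> (nat \<Rightarrow> real)" where
  "matT_apply d A v = (\<lambda>j. \<Sum>i<d. A i j * v i)"

definition mat_apply :: "nat \<Rightarrow> (nat \<Rightarrow> nat \<Rightarrow> real) \<Rightarrow> (nat \<Rightarrow> real) \<Rightarrow> (nat \<Rightarrow> real)" where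
  "mat_apply k A y = (\<lambda>i. \<Sum>j<k. A i j * y j)"

definition norm21 :: "nat \<Rightarrow> nat \<Rightarrow> (nat \<Rightarrow> nat \<Rightarrow> real) \<Rightarrow> real" where
  "norm21 d k A = (\<Sum>j<k. vnorm d (\<lambda>i. A i j))"

definition opnorm :: "nat \<Rightarrow> nat \<Rightarrow> (nat \<Rightarrow> nat \<Rightarrow> real) \<Rightarrow> real" where
  "opnorm d k A = Sup {vnorm d (mat_apply k A y) | y. vnorm k y \<le> 1}"

definition zeta :: "nat \<Rightarrow> (nat \<Rightarrow> real) \<Rightarrow> (nat \<Rightarrow> real) \<Rightarrow> real" where
  "zeta k u v = (1 / real k) * (\<Sum>j<k. (u j - v j)\<^sup>2)"

(* F_k(G): vectors indexed by i < n (entries i >= n are irrelevant) *)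
definition Fk :: "nat \<Rightarrow> nat \<Rightarrow> (real \<Rightarrow> real) \<Rightarrow> (nat \<Rightarrow> nat \<Rightarrow> real)
                   \<Rightarrow> (nat \<Rightarrow> nat \<Rightarrow> real) \<Rightarrow> (nat \<Rightarrow> nat \<Rightarrow> real) set \<Rightarrow> (nat \<Rightarrow> real) set" where
  "Fk d k \<phi> x x' G =
     (\<lambda>A. (\<lambda>i. zeta k (\<lambda>j. \<phi> (matT_apply d A (x i) j)) (\<lambda>j. \<phi> (matT_apply d A (x' i) j)))) ` G"

definition Jset :: "nat \<Rightarrow> nat \<Rightarrow> real \<Rightarrow> real \<Rightarrow> (nat \<Rightarrow> nat \<Rightarrow> real) set" where
  "Jset d k a a' = {A. norm21 d k A \<le> a \<and> opnorm d k A \<le> a'}"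

definition rademacher :: "nat \<Rightarrow> (nat \<Rightarrow> real) set \<Rightarrow> real" where
  "rademacher n F = (1 / real n) *
     ((\<Sum>\<epsilon>\<in>PiE {..<n} (\<lambda>_. {-1, 1::real}). Sup ((\<lambda>f. \<Sum>i<n. \<epsilon> i * f i) ` F)) / 2 ^ n)"

end

theory Submission
  imports Defs "HOL-Probability.Hoeffding"
begin

(* Each coordinate A \<mapsto> \<zeta>\<^sub>k(\<phi>(A\<^sup>t x\<^sub>i), \<phi>(A\<^sup>t x'\<^sub>i)) of the class is Lipschitz, with
   constant \<kappa> = 8 L\<^sup>2 a' b / k on the set J of admissible A, in the Euclidean norm of the
   2k-vector (A\<^sup>t x\<^sub>i, A\<^sup>t x'\<^sub>i). Maurer's vector-contraction inequality, proved by induction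
   over the signs with Khintchine's inequality (constant 2) in each step, therefore bounds
   the Rademacher average by 2\<kappa> times that of the linear process
   \<Sum>\<^sub>i \<eta>\<^sub>i \<cdot> (A\<^sup>t x\<^sub>i, A\<^sup>t x'\<^sub>i) = \<Sum>\<^sub>j \<langle>A\<^sub>j, T\<^sub>j(\<eta>)\<rangle> \<le> \<parallel>A\<parallel>\<^sub>2\<^sub>,\<^sub>1 max\<^sub>j \<parallel>T\<^sub>j(\<eta>)\<parallel>,
   where A\<^sub>j are the columns of A. Each T\<^sub>j is a Rademacher vector with variance at most
   2 n b\<^sup>2, and its moments of order 2 \<lceil>ln (2k)\<rceil>, controlled through the sub-Gaussian
   moment generating function, give E max\<^sub>j \<parallel>T\<^sub>j\<parallel> \<le> e sqrt (12 n b\<^sup>2 ln (2k)). The resulting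
   bound C a a' b\<^sup>2 L\<^sup>2 sqrt (ln (2k)) / (k sqrt n) is stronger than the stated one. *)

section \<open>Uniform averages over sign vectors\<close>

definition avg :: "'a set \<Rightarrow> ('a \<Rightarrow> real) \<Rightarrow> real" where
  "avg P h = (\<Sum>p\<in>P. h p) / real (card P)"

abbreviation signs :: "'a set \<Rightarrow> ('a \<Rightarrow> real) set" where
  "signs S \<equiv> PiE S (\<lambda>_. {-1, 1::real})"

lemma finite_signs: "finite S \<Longrightarrow> finite (signs S)"
  by (simp add: finite_PiE)

lemma signs_nonempty: "signs S \<noteq> {}"
  by (simp add: PiE_eq_empty_iff)

lemma avg_cong: "(\<And>p. p \<in> P \<Longrightarrow> f p = g p) \<Longrightarrow> avg P f = avg P g"
  unfolding avg_def by simp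

lemma avg_mono: "(\<And>p. p \<in> P \<Longrightarrow> f p \<le> g p) \<Longrightarrow> avg P f \<le> avg P g"
  unfolding avg_def by (intro divide_right_mono sum_mono) auto

lemma avg_nonneg: "(\<And>p. p \<in> P \<Longrightarrow> 0 \<le> f p) \<Longrightarrow> 0 \<le> avg P f"
  unfolding avg_def by (intro divide_nonneg_nonneg sum_nonneg) auto

lemma avg_const: "finite P \<Longrightarrow> P \<noteq> {} \<Longrightarrow> avg P (\<lambda>_. c) = c"
  by (simp add: avg_def)

lemma avg_add: "avg P (\<lambda>p. f p + g p) = avg P f + avg P g"
  unfolding avg_def by (simp add: sum.distrib add_divide_distrib)

lemma avg_sum: "avg P (\<lambda>p. \<Sum>l\<in>L. F l p) = (\<Sum>l\<in>L. avg P (F l))"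
  unfolding avg_def by (simp add: sum.swap[of _ P L] sum_divide_distrib)

lemma avg_mult_left: "avg P (\<lambda>p. c * f p) = c * avg P f"
  unfolding avg_def by (simp add: sum_distrib_left)

lemma avg_mult_right: "avg P (\<lambda>p. f p * c) = avg P f * c"
  unfolding avg_def by (simp add: sum_distrib_right)

lemma avg_divide: "avg P (\<lambda>p. f p / c) = avg P f / c"
  unfolding avg_def by (simp add: sum_divide_distrib mult.commute)

lemma avg_swap: "avg P (\<lambda>p. avg Q (\<lambda>q. f p q)) = avg Q (\<lambda>q. avg P (\<lambda>p. f p q))"
  unfolding avg_def by (simp add: sum_divide_distrib[symmetric] sum.swap[of _ P Q])

lemma convex_on_power_nonneg: "convex_on {0::real..} (\<lambda>x. x ^ q)"
proof (cases "even q")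
  case True thus ?thesis using convex_power_even[of q] convex_on_subset by blast
next
  case False thus ?thesis using convex_power_odd[of q] by simp
qed

lemma avg_power_le:
  assumes "finite P" "P \<noteq> {}" "\<And>p. p \<in> P \<Longrightarrow> 0 \<le> Y p"
  shows "avg P Y ^ r \<le> avg P (\<lambda>p. Y p ^ r)"
proof -
  have "(\<Sum>p\<in>P. (1 / real (card P)) *\<^sub>R Y p) ^ r \<le> (\<Sum>p\<in>P. (1 / real (card P)) * Y p ^ r)"
    by (rule convex_on_sum[OF assms(1,2) convex_on_power_nonneg]) (use assms in auto)
  thus ?thesis unfolding avg_def by (simp add: sum_divide_distrib)
qed

lemma avg_PiE_insert:
  assumes "i \<notin> J" "finite J" "\<And>j. finite (T j)"
  shows "avg (PiE (insert i J) T) h = avg (T i) (\<lambda>t. avg (PiE J T) (\<lambda>e. h (e(i:=t))))"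
proof -
  have sum: "(\<Sum>p\<in>PiE (insert i J) T. h p) = (\<Sum>(t,e)\<in>T i \<times> PiE J T. h (e(i:=t)))"
    unfolding PiE_insert_eq using sum.reindex[OF inj_combinator[OF assms(1)], of h]
    by (simp add: case_prod_unfold comp_def)
  have card: "card (PiE (insert i J) T) = card (T i) * card (PiE J T)"
    using assms by (simp add: card_PiE)
  show ?thesis unfolding avg_def sum card sum.cartesian_product[symmetric]
    by (simp add: sum_divide_distrib[symmetric])
qed

lemma avg_signs_insert:
  assumes "i \<notin> J" "finite J"
  shows "avg (signs (insert i J)) h = avg (signs J) (\<lambda>e. (h (e(i := -1)) + h (e(i := 1))) / 2)"
proof -
  have "avg (signs (insert i J)) h = avg {-1, 1} (\<lambda>t. avg (signs J) (\<lambda>e. h (e(i := t))))"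
    by (rule avg_PiE_insert) (use assms in auto)
  then show ?thesis
    unfolding avg_def by (simp add: sum.distrib add_divide_distrib sum_divide_distrib[symmetric])
qed

lemma avg_PiE_signs_insert:
  assumes "i \<notin> J" "finite J" "finite M"
  shows "avg (PiE (insert i J) (\<lambda>_. signs M)) h
    = avg (signs M) (\<lambda>t. avg (PiE J (\<lambda>_. signs M)) (\<lambda>e. h (e(i := t))))"
  by (rule avg_PiE_insert) (use assms in \<open>auto simp: finite_signs\<close>)

lemma sum_insert_fun_upd:
  assumes "i \<notin> J" "finite J"
  shows "(\<Sum>j\<in>insert i J. F ((e(i := t)) j) j) = F t i + (\<Sum>j\<in>J. F (e j) j)"
proof -
  have "(\<Sum>j\<in>J. F ((e(i := t)) j) j) = (\<Sum>j\<in>J. F (e j) j)"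
    using assms by (intro sum.cong) auto
  thus ?thesis using assms by simp
qed

definition flip_signs :: "'a set \<Rightarrow> ('a \<Rightarrow> real) \<Rightarrow> ('a \<Rightarrow> real)" where
  "flip_signs M \<theta> = restrict (\<lambda>m. - \<theta> m) M"

lemma avg_flip_signs: "avg (signs M) (\<lambda>\<theta>. h (flip_signs M \<theta>)) = avg (signs M) h"
proof -
  have inv: "flip_signs M (flip_signs M \<theta>) = \<theta>" if "\<theta> \<in> signs M" for \<theta>
    using that unfolding flip_signs_def by (auto simp: PiE_iff extensional_def restrict_def)
  have "flip_signs M \<theta> \<in> signs M" if "\<theta> \<in> signs M" for \<theta>
    using that unfolding flip_signs_def by (auto simp: PiE_iff)
  with inv show ?thesis
    unfolding avg_def
    by (intro arg_cong[where f = "\<lambda>z. z / _"] sum.reindex_bij_witness[where i = "flip_signs M" and j = "flip_signs M"])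
       auto
qed

lemma sum_flip_signs: "(\<Sum>m\<in>M. flip_signs M \<theta> m * c m) = - (\<Sum>m\<in>M. \<theta> m * c m)"
  unfolding flip_signs_def by (simp add: sum_negf[symmetric])

section \<open>Moments of Rademacher sums\<close>

lemma avg_rademacher_square:
  assumes "finite M"
  shows "avg (signs M) (\<lambda>\<theta>. (\<Sum>m\<in>M. \<theta> m * v m)\<^sup>2) = (\<Sum>m\<in>M. (v m)\<^sup>2)"
  using assms
proof (induction M rule: finite_induct)
  case empty
  then show ?case by (simp add: avg_def)
next
  case (insert i J)
  let ?X = "\<lambda>e. \<Sum>m\<in>J. e m * v m"
  have "avg (signs (insert i J)) (\<lambda>\<theta>. (\<Sum>m\<in>insert i J. \<theta> m * v m)\<^sup>2)
      = avg (signs J) (\<lambda>e. (?X e)\<^sup>2 + (v i)\<^sup>2)"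
    unfolding avg_signs_insert[OF insert(2,1)] sum_insert_fun_upd[OF insert(2,1), where F = "\<lambda>s m. s * v m"]
    by (intro avg_cong) (simp add: power2_eq_square algebra_simps)
  also have "\<dots> = (\<Sum>m\<in>insert i J. (v m)\<^sup>2)"
    using insert by (simp add: avg_add avg_const finite_signs signs_nonempty)
  finally show ?case .
qed

lemma avg_rademacher_power4_le:
  assumes "finite M"
  shows "avg (signs M) (\<lambda>\<theta>. (\<Sum>m\<in>M. \<theta> m * v m)^4) \<le> 3 * (\<Sum>m\<in>M. (v m)\<^sup>2)\<^sup>2"
  using assms
proof (induction M rule: finite_induct)
  case empty
  then show ?case by (simp add: avg_def)
next
  case (insert i J)
  let ?X = "\<lambda>e. \<Sum>m\<in>J. e m * v m"
  let ?s = "\<Sum>m\<in>J. (v m)\<^sup>2"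
  have "avg (signs (insert i J)) (\<lambda>\<theta>. (\<Sum>m\<in>insert i J. \<theta> m * v m)^4)
      = avg (signs J) (\<lambda>e. (?X e)^4 + 6 * (v i)\<^sup>2 * (?X e)\<^sup>2 + (v i)^4)"
    unfolding avg_signs_insert[OF insert(2,1)] sum_insert_fun_upd[OF insert(2,1), where F = "\<lambda>s m. s * v m"]
    by (intro avg_cong) (simp add: power2_eq_square power4_eq_xxxx algebra_simps)
  also have "\<dots> = avg (signs J) (\<lambda>e. (?X e)^4) + 6 * (v i)\<^sup>2 * ?s + (v i)^4"
    using insert
    by (simp add: avg_add avg_mult_left avg_const finite_signs signs_nonempty avg_rademacher_square)
  also have "\<dots> \<le> 3 * ?s\<^sup>2 + 6 * (v i)\<^sup>2 * ?s + (v i)^4"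
    using insert by simp
  also have "\<dots> \<le> 3 * ((v i)\<^sup>2 + ?s)\<^sup>2"
  proof -
    have "0 \<le> (v i)^4" by simp
    thus ?thesis by (simp add: power2_eq_square power4_eq_xxxx algebra_simps)
  qed
  finally show ?case using insert by simp
qed

lemma square_le_abs_quartic:
  fixes x s :: real
  assumes "s > 0"
  shows "x\<^sup>2 \<le> (4/3) * s * \<bar>x\<bar> + x^4 / (12 * s\<^sup>2)"
proof -
  define t where "t = \<bar>x\<bar>"
  have t0: "t \<ge> 0" unfolding t_def by simp
  \<comment> \<open>the difference is \<open>t (t - 2s)\<^sup>2 (t + 4s) / (12 s\<^sup>2)\<close>\<close>
  have "0 \<le> t * (t - 2 * s)\<^sup>2 * (t + 4 * s)"
    using assms t0 by simp
  also have "\<dots> = 16 * s^3 * t + t^4 - 12 * s\<^sup>2 * t\<^sup>2"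
    by (simp add: power2_eq_square power3_eq_cube power4_eq_xxxx algebra_simps)
  finally have "0 \<le> (16 * s^3 * t + t^4 - 12 * s\<^sup>2 * t\<^sup>2) / (12 * s\<^sup>2)"
    using assms by simp
  also have "\<dots> = (4/3) * s * t + t^4 / (12 * s\<^sup>2) - t\<^sup>2"
    using assms by (simp add: field_simps power2_eq_square power3_eq_cube)
  finally show ?thesis
    unfolding t_def by (simp add: power_even_abs)
qed

lemma khintchine_L1:
  assumes "finite M"
  shows "sqrt (\<Sum>m\<in>M. (v m)\<^sup>2) \<le> 2 * avg (signs M) (\<lambda>\<theta>. \<bar>\<Sum>m\<in>M. \<theta> m * v m\<bar>)"
proof -
  define s where "s = sqrt (\<Sum>m\<in>M. (v m)\<^sup>2)"
  let ?X = "\<lambda>\<theta>. \<Sum>m\<in>M. \<theta> m * v m"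
  let ?E = "avg (signs M) (\<lambda>\<theta>. \<bar>?X \<theta>\<bar>)"
  have E0: "0 \<le> ?E" by (intro avg_nonneg) simp
  have ss: "s\<^sup>2 = (\<Sum>m\<in>M. (v m)\<^sup>2)" unfolding s_def by (simp add: sum_nonneg)
  have "s \<ge> 0" unfolding s_def by (simp add: sum_nonneg)
  show ?thesis
  proof (cases "s = 0")
    case True thus ?thesis using E0 unfolding s_def by simp
  next
    case False
    with \<open>s \<ge> 0\<close> have sp: "s > 0" by simp
    have "s\<^sup>2 = avg (signs M) (\<lambda>\<theta>. (?X \<theta>)\<^sup>2)" using avg_rademacher_square[OF assms] ss by simp
    also have "\<dots> \<le> avg (signs M) (\<lambda>\<theta>. (4/3) * s * \<bar>?X \<theta>\<bar> + (1 / (12 * s\<^sup>2)) * (?X \<theta>)^4)"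
      by (intro avg_mono) (use square_le_abs_quartic[OF sp] in simp)
    also have "\<dots> = (4/3) * s * ?E + (1 / (12 * s\<^sup>2)) * avg (signs M) (\<lambda>\<theta>. (?X \<theta>)^4)"
      by (simp only: avg_add avg_mult_left)
    also have "\<dots> \<le> (4/3) * s * ?E + (1 / (12 * s\<^sup>2)) * (3 * (s\<^sup>2)\<^sup>2)"
      using avg_rademacher_power4_le[OF assms, of v] ss sp
      by (intro add_left_mono mult_left_mono) (simp_all add: sum_nonneg)
    also have "\<dots> = (4/3) * s * ?E + s\<^sup>2 / 4" using sp by (simp add: power2_eq_square)
    finally have "(3/4) * s * s \<le> (4/3) * s * ?E" by (simp add: power2_eq_square)
    hence "(3/4) * s \<le> (4/3) * ?E" using sp by (simp add: mult.commute mult.left_commute)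
    thus ?thesis unfolding s_def[symmetric] using E0 by linarith
  qed
qed

section \<open>Vector contraction\<close>

lemma bounded_mult_left_comp: "bounded (f ` X) \<Longrightarrow> bounded ((\<lambda>x. c * f x :: real) ` X)"
  using bounded_scaleR_comp[of f X c] by simp

lemma bounded_const_comp: "bounded ((\<lambda>_. c) ` X)"
  by (rule bounded_subset[of "{c}"]) auto

lemma bounded_sum_comp:
  fixes h :: "'s \<Rightarrow> 'x \<Rightarrow> real"
  shows "finite S \<Longrightarrow> (\<And>s. s \<in> S \<Longrightarrow> bounded (h s ` X)) \<Longrightarrow> bounded ((\<lambda>x. \<Sum>s\<in>S. h s x) ` X)"
proof (induction S rule: finite_induct)
  case empty show ?case by (simp add: bounded_const_comp)
next
  case (insert a S) thus ?case by (simp add: bounded_plus_comp)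
qed

lemma contraction_step:
  fixes R f :: "'x \<Rightarrow> real" and g :: "'x \<Rightarrow> 'm \<Rightarrow> real"
  assumes M: "finite M" and X: "X \<noteq> {}" and bR: "bounded (R ` X)"
    and bg: "\<And>m. m \<in> M \<Longrightarrow> bounded ((\<lambda>x. g x m) ` X)"
    and lip: "\<And>x y. x \<in> X \<Longrightarrow> y \<in> X \<Longrightarrow> \<bar>f x - f y\<bar> \<le> L2_set (\<lambda>m. g x m - g y m) M"
  shows "(Sup ((\<lambda>x. R x + f x) ` X) + Sup ((\<lambda>x. R x - f x) ` X)) / 2
         \<le> avg (signs M) (\<lambda>\<theta>. Sup ((\<lambda>x. R x + 2 * (\<Sum>m\<in>M. \<theta> m * g x m)) ` X))"
proof -
  define G where "G = (\<lambda>\<theta> x. \<Sum>m\<in>M. \<theta> m * g x m)"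
  define U where "U = (\<lambda>\<theta>. Sup ((\<lambda>x. R x + 2 * G \<theta> x) ` X))"
  have bG: "bounded (G \<theta> ` X)" for \<theta>
    unfolding G_def by (intro bounded_sum_comp M bounded_mult_left_comp bg)
  have U_upper: "R x + 2 * G \<theta> x \<le> U \<theta>" if "x \<in> X" for x \<theta>
    unfolding U_def using that
    by (intro cSUP_upper bounded_imp_bdd_above bounded_plus_comp bR bounded_mult_left_comp bG)
  have U_flip: "R x - 2 * G \<theta> x \<le> U (flip_signs M \<theta>)" if "x \<in> X" for x \<theta>
    using U_upper[OF that, of "flip_signs M \<theta>"] unfolding G_def sum_flip_signs by simp
  \<comment> \<open>symmetrize over \<open>\<theta>\<close> and \<open>-\<theta>\<close>, and control \<open>f x - f y\<close> by Khintchine\<close>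
  have pair: "R x + f x + (R y - f y) \<le> 2 * avg (signs M) U" if x: "x \<in> X" and y: "y \<in> X" for x y
  proof -
    have "R x + f x + (R y - f y) \<le> R x + R y + L2_set (\<lambda>m. g x m - g y m) M"
      using lip[OF x y] by linarith
    also have "\<dots> \<le> R x + R y + 2 * avg (signs M) (\<lambda>\<theta>. \<bar>\<Sum>m\<in>M. \<theta> m * (g x m - g y m)\<bar>)"
      using khintchine_L1[OF M, of "\<lambda>m. g x m - g y m"] unfolding L2_set_def by linarith
    also have "\<dots> = avg (signs M) (\<lambda>\<theta>. R x + R y + 2 * \<bar>G \<theta> x - G \<theta> y\<bar>)"
      unfolding G_def
      by (simp add: avg_add avg_mult_left avg_const M finite_signs signs_nonempty
          algebra_simps sum_subtractf)
    also have "\<dots> \<le> avg (signs M) (\<lambda>\<theta>. U \<theta> + U (flip_signs M \<theta>))"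
    proof (intro avg_mono)
      fix \<theta>
      show "R x + R y + 2 * \<bar>G \<theta> x - G \<theta> y\<bar> \<le> U \<theta> + U (flip_signs M \<theta>)"
        using U_upper[OF x, of \<theta>] U_upper[OF y, of \<theta>] U_flip[OF x, of \<theta>] U_flip[OF y, of \<theta>]
        by (cases "G \<theta> x \<ge> G \<theta> y") (simp_all add: abs_if)
    qed
    also have "\<dots> = 2 * avg (signs M) U"
      by (simp add: avg_add avg_flip_signs[of M U])
    finally show ?thesis .
  qed
  have "Sup ((\<lambda>x. R x + f x) ` X) \<le> 2 * avg (signs M) U - (R y - f y)" if y: "y \<in> X" for y
    using pair[OF _ y] X by (intro cSUP_least) (auto simp: algebra_simps)
  hence "Sup ((\<lambda>y. R y - f y) ` X) \<le> 2 * avg (signs M) U - Sup ((\<lambda>x. R x + f x) ` X)"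
    using X by (intro cSUP_least) (auto simp: algebra_simps)
  thus ?thesis unfolding U_def G_def by simp
qed

lemma vector_contraction:
  fixes f :: "'i \<Rightarrow> 'x \<Rightarrow> real" and g :: "'i \<Rightarrow> 'x \<Rightarrow> 'm \<Rightarrow> real" and R :: "'x \<Rightarrow> real"
  assumes "finite I" "finite M" "X \<noteq> {}" "bounded (R ` X)"
    "\<And>i. i \<in> I \<Longrightarrow> bounded (f i ` X)"
    "\<And>i m. i \<in> I \<Longrightarrow> m \<in> M \<Longrightarrow> bounded ((\<lambda>x. g i x m) ` X)"
    "\<And>i x y. i \<in> I \<Longrightarrow> x \<in> X \<Longrightarrow> y \<in> X \<Longrightarrow> \<bar>f i x - f i y\<bar> \<le> L2_set (\<lambda>m. g i x m - g i y m) M"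
  shows "avg (signs I) (\<lambda>\<epsilon>. Sup ((\<lambda>x. R x + (\<Sum>i\<in>I. \<epsilon> i * f i x)) ` X))
     \<le> avg (PiE I (\<lambda>_. signs M)) (\<lambda>\<eta>. Sup ((\<lambda>x. R x + 2 * (\<Sum>i\<in>I. \<Sum>m\<in>M. \<eta> i m * g i x m)) ` X))"
  using assms
proof (induction I arbitrary: R rule: finite_induct)
  case empty
  then show ?case by (simp add: avg_def)
next
  case (insert i J)
  note M = insert.prems(1) and X = insert.prems(2) and bR = insert.prems(3)
  have IH: "avg (signs J) (\<lambda>\<epsilon>. Sup ((\<lambda>x. R' x + (\<Sum>j\<in>J. \<epsilon> j * f j x)) ` X))
      \<le> avg (PiE J (\<lambda>_. signs M)) (\<lambda>\<eta>. Sup ((\<lambda>x. R' x + 2 * (\<Sum>j\<in>J. \<Sum>m\<in>M. \<eta> j m * g j x m)) ` X))"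
    if "bounded (R' ` X)" for R'
    using insert.prems(4-6) by (intro insert.IH[OF M X that]) auto
  have bg_i: "bounded ((\<lambda>x. g i x m) ` X)" if "m \<in> M" for m
    using insert.prems(5) that by simp
  have lip_i: "\<bar>f i x - f i y\<bar> \<le> L2_set (\<lambda>m. g i x m - g i y m) M" if "x \<in> X" "y \<in> X" for x y
    using insert.prems(6) that by simp
  define S where "S = (\<lambda>e x. \<Sum>s\<in>J. e s * f s x)"
  define G where "G = (\<lambda>\<theta> x. \<Sum>m\<in>M. \<theta> m * g i x m)"
  have bS: "bounded (S e ` X)" for e
    unfolding S_def by (intro bounded_sum_comp bounded_mult_left_comp insert) auto
  have bG: "bounded (G \<theta> ` X)" for \<theta>
    unfolding G_def by (intro bounded_sum_comp M bounded_mult_left_comp insert.prems) auto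
  have upd_f: "(\<Sum>s\<in>insert i J. (e(i:=t)) s * f s x) = t * f i x + S e x" for e t x
    unfolding S_def by (rule sum_insert_fun_upd[OF insert(2,1), where F = "\<lambda>t s. t * f s x"])
  have upd_g: "(\<Sum>j\<in>insert i J. \<Sum>m\<in>M. (e(i:=\<theta>)) j m * g j x m)
      = G \<theta> x + (\<Sum>j\<in>J. \<Sum>m\<in>M. e j m * g j x m)" for e \<theta> x
    unfolding G_def by (rule sum_insert_fun_upd[OF insert(2,1), where F = "\<lambda>t j. \<Sum>m\<in>M. t m * g j x m"])
  have "avg (signs (insert i J)) (\<lambda>\<epsilon>. Sup ((\<lambda>x. R x + (\<Sum>s\<in>insert i J. \<epsilon> s * f s x)) ` X))
      = avg (signs J) (\<lambda>e. (Sup ((\<lambda>x. (R x + S e x) + f i x) ` X) + Sup ((\<lambda>x. (R x + S e x) - f i x) ` X)) / 2)"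
    unfolding avg_signs_insert[OF insert(2,1)] upd_f by (simp add: algebra_simps)
  also have "\<dots> \<le> avg (signs J) (\<lambda>e. avg (signs M) (\<lambda>\<theta>. Sup ((\<lambda>x. (R x + S e x) + 2 * G \<theta> x) ` X)))"
    unfolding G_def
    by (intro avg_mono contraction_step[OF M X _ bg_i lip_i] bounded_plus_comp bR bS)
  also have "\<dots> = avg (signs M) (\<lambda>\<theta>. avg (signs J) (\<lambda>e. Sup ((\<lambda>x. (R x + 2 * G \<theta> x) + S e x) ` X)))"
    by (subst avg_swap) (simp add: add_ac)
  also have "\<dots> \<le> avg (signs M) (\<lambda>\<theta>. avg (PiE J (\<lambda>_. signs M))
      (\<lambda>\<eta>. Sup ((\<lambda>x. (R x + 2 * G \<theta> x) + 2 * (\<Sum>j\<in>J. \<Sum>m\<in>M. \<eta> j m * g j x m)) ` X)))"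
    unfolding S_def by (intro avg_mono IH bounded_plus_comp bR bounded_mult_left_comp bG)
  also have "\<dots> = avg (PiE (insert i J) (\<lambda>_. signs M))
      (\<lambda>\<eta>. Sup ((\<lambda>x. R x + 2 * (\<Sum>j\<in>insert i J. \<Sum>m\<in>M. \<eta> j m * g j x m)) ` X))"
    unfolding avg_PiE_signs_insert[OF insert(2,1) M] upd_g by (simp add: distrib_left add.assoc)
  finally show ?case .
qed

section \<open>Sub-Gaussian moment bounds\<close>

lemma cosh_le_exp_square_half:
  fixes x :: real
  shows "cosh x \<le> exp (x\<^sup>2 / 2)"
proof -
  define a where "a = \<bar>x\<bar>"
  have a0: "a \<ge> 0" unfolding a_def by simp
  \<comment> \<open>Hoeffding's lemma for a symmetric Bernoulli variable\<close>
  have "- (2 * a) * (1/2) + ln (1 + (1/2) * (exp (2 * a) - 1)) \<le> (2 * a)\<^sup>2 / 8"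
    using Hoeffdings_lemma_aux[of "2 * a" "1/2"] a0 by simp
  hence "ln ((1 + exp (2 * a)) / 2) \<le> x\<^sup>2 / 2 + a"
    unfolding a_def by (simp add: power2_eq_square field_simps)
  moreover have "(1 + exp (2 * a)) / 2 > 0" by (simp add: add_pos_pos)
  ultimately have "(1 + exp (2 * a)) / 2 \<le> exp (x\<^sup>2 / 2 + a)"
    by (metis exp_le_cancel_iff exp_ln)
  hence "(1 + exp (2 * a)) / 2 * exp (- a) \<le> exp (x\<^sup>2 / 2 + a) * exp (- a)"
    by (rule mult_right_mono) simp
  hence "cosh a \<le> exp (x\<^sup>2 / 2)"
    by (simp add: cosh_def field_simps exp_add[symmetric] mult_exp_exp)
  thus ?thesis unfolding a_def by simp
qed

lemma avg_exp_rademacher_sum_le: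
  assumes "finite S"
  shows "avg (signs S) (\<lambda>\<theta>. exp (\<Sum>s\<in>S. \<theta> s * c s)) \<le> exp ((\<Sum>s\<in>S. (c s)\<^sup>2) / 2)"
  using assms
proof (induction S rule: finite_induct)
  case empty thus ?case by (simp add: avg_def)
next
  case (insert i J)
  have "avg (signs (insert i J)) (\<lambda>\<theta>. exp (\<Sum>s\<in>insert i J. \<theta> s * c s))
      = avg (signs J) (\<lambda>e. cosh (c i) * exp (\<Sum>s\<in>J. e s * c s))"
    unfolding avg_signs_insert[OF insert(2,1)] sum_insert_fun_upd[OF insert(2,1), where F = "\<lambda>t s. t * c s"]
    by (intro avg_cong) (simp add: cosh_def mult_exp_exp algebra_simps)
  also have "\<dots> = cosh (c i) * avg (signs J) (\<lambda>e. exp (\<Sum>s\<in>J. e s * c s))"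
    by (rule avg_mult_left)
  also have "\<dots> \<le> exp ((c i)\<^sup>2 / 2) * exp ((\<Sum>s\<in>J. (c s)\<^sup>2) / 2)"
    by (intro mult_mono cosh_le_exp_square_half insert.IH avg_nonneg) auto
  also have "\<dots> = exp ((\<Sum>s\<in>insert i J. (c s)\<^sup>2) / 2)"
    using insert by (simp add: exp_add[symmetric] add_divide_distrib)
  finally show ?case .
qed

lemma avg_exp_rademacher_double_sum_le:
  assumes "finite I" "finite M"
  shows "avg (PiE I (\<lambda>_. signs M)) (\<lambda>\<eta>. exp (\<Sum>i\<in>I. \<Sum>m\<in>M. \<eta> i m * c i m))
     \<le> exp ((\<Sum>i\<in>I. \<Sum>m\<in>M. (c i m)\<^sup>2) / 2)"
  using assms
proof (induction I rule: finite_induct)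
  case empty thus ?case by (simp add: avg_def)
next
  case (insert i J)
  have "avg (PiE (insert i J) (\<lambda>_. signs M)) (\<lambda>\<eta>. exp (\<Sum>j\<in>insert i J. \<Sum>m\<in>M. \<eta> j m * c j m))
     = avg (signs M) (\<lambda>t. exp (\<Sum>m\<in>M. t m * c i m))
       * avg (PiE J (\<lambda>_. signs M)) (\<lambda>e. exp (\<Sum>j\<in>J. \<Sum>m\<in>M. e j m * c j m))"
    unfolding avg_PiE_signs_insert[OF insert(2,1) insert.prems]
      sum_insert_fun_upd[OF insert(2,1), where F = "\<lambda>t j. \<Sum>m\<in>M. t m * c j m"]
    by (simp only: exp_add avg_mult_left avg_mult_right)
  also have "\<dots> \<le> exp ((\<Sum>m\<in>M. (c i m)\<^sup>2) / 2) * exp ((\<Sum>j\<in>J. \<Sum>m\<in>M. (c j m)\<^sup>2) / 2)"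
    by (intro mult_mono avg_exp_rademacher_sum_le insert.IH insert.prems avg_nonneg) auto
  also have "\<dots> = exp ((\<Sum>j\<in>insert i J. \<Sum>m\<in>M. (c j m)\<^sup>2) / 2)"
    using insert by (simp add: exp_add[symmetric] add_divide_distrib)
  finally show ?case .
qed

lemma power_div_fact_le_exp:
  fixes y :: real
  assumes "0 \<le> y"
  shows "y ^ n / fact n \<le> exp y"
proof -
  have "y ^ n / fact n \<le> (\<Sum>k\<le>n. y ^ k / fact k)"
    by (rule member_le_sum) (use assms in auto)
  also have "\<dots> \<le> exp y"
    using assms summable_exp_generic[of y]
    by (auto simp: exp_def divide_inverse ac_simps intro!: sum_le_suminf)
  finally show ?thesis .
qed

lemma even_power_le_exp_sum:
  fixes z l :: real
  assumes "l > 0"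
  shows "z ^ (2 * q) \<le> fact (2 * q) / l ^ (2 * q) * (exp (l * z) + exp (- (l * z)))"
proof -
  have "(l * \<bar>z\<bar>) ^ (2 * q) / fact (2 * q) \<le> exp (l * \<bar>z\<bar>)"
    using assms by (intro power_div_fact_le_exp) simp
  also have "\<dots> \<le> exp (l * z) + exp (- (l * z))"
    by (cases "z \<ge> 0") (auto simp: add_pos_pos)
  finally have "l ^ (2 * q) * z ^ (2 * q) \<le> fact (2 * q) * (exp (l * z) + exp (- (l * z)))"
    by (simp add: power_mult_distrib power_even_abs divide_le_eq mult.commute)
  thus ?thesis using assms by (simp add: field_simps)
qed

lemma fact_double_div_power_le:
  assumes s: "s > 0" and q: "q \<ge> 1"
  shows "fact (2 * q) / (2 * real q / s) ^ q * (2 * exp 1 ^ q) \<le> 2 * (2 * exp 1 * real q * s) ^ q"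
proof -
  have "fact (2 * q) \<le> ((2 * real q)\<^sup>2) ^ q"
    using fact_le_power[of "2 * q", where 'a = real] by (simp add: power_mult)
  then have "fact (2 * q) / (2 * real q / s) ^ q * (2 * exp 1 ^ q)
      \<le> ((2 * real q)\<^sup>2) ^ q / (2 * real q / s) ^ q * (2 * exp 1 ^ q)"
    using s q by (intro mult_right_mono divide_right_mono) auto
  also have "\<dots> = 2 * ((2 * real q)\<^sup>2 / (2 * real q / s) * exp 1) ^ q"
    by (rule sym, subst power_mult_distrib, subst power_divide) simp
  also have "(2 * real q)\<^sup>2 / (2 * real q / s) * exp 1 = 2 * exp 1 * real q * s"
    using s q by (simp add: field_simps power2_eq_square)
  finally show ?thesis .
qed

lemma avg_rademacher_double_sum_even_moment:
  assumes I: "finite I" and M: "finite M" and q: "q \<ge> 1"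
  shows "avg (PiE I (\<lambda>_. signs M)) (\<lambda>\<eta>. (\<Sum>i\<in>I. \<Sum>m\<in>M. \<eta> i m * c i m) ^ (2 * q))
    \<le> 2 * (2 * exp 1 * real q * (\<Sum>i\<in>I. \<Sum>m\<in>M. (c i m)\<^sup>2)) ^ q"
proof -
  define P where "P = PiE I (\<lambda>_. signs M)"
  define Z where "Z = (\<lambda>\<eta>. \<Sum>i\<in>I. \<Sum>m\<in>M. \<eta> i m * c i m)"
  define s where "s = (\<Sum>i\<in>I. \<Sum>m\<in>M. (c i m)\<^sup>2)"
  have s0: "s \<ge> 0" unfolding s_def by (intro sum_nonneg) auto
  show ?thesis
  proof (cases "s = 0")
    case True
    then have "\<forall>i\<in>I. \<forall>m\<in>M. c i m = 0"
      using I M unfolding s_def by (simp add: sum_nonneg_eq_0_iff sum_nonneg)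
    then have "avg P (\<lambda>\<eta>. Z \<eta> ^ (2 * q)) = 0"
      using q unfolding avg_def Z_def by simp
    thus ?thesis unfolding P_def Z_def s_def[symmetric] using s0 by simp
  next
    case False
    hence sp: "s > 0" using s0 by simp
    \<comment> \<open>the Chernoff parameter \<open>l\<close> balances \<open>fact (2q) / l^(2q)\<close> against \<open>exp (l\<^sup>2 s / 2)\<close>\<close>
    define l where "l = sqrt (2 * real q / s)"
    have lp: "l > 0" unfolding l_def using sp q by simp
    have l2: "l\<^sup>2 = 2 * real q / s" unfolding l_def using sp by simp
    have mgf: "avg P (\<lambda>\<eta>. exp (k * Z \<eta>)) \<le> exp (k\<^sup>2 * s / 2)" for k
    proof -
      have "(\<lambda>\<eta>. exp (k * Z \<eta>)) = (\<lambda>\<eta>. exp (\<Sum>i\<in>I. \<Sum>m\<in>M. \<eta> i m * (k * c i m)))"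
        unfolding Z_def by (simp add: sum_distrib_left algebra_simps)
      moreover have "(\<Sum>i\<in>I. \<Sum>m\<in>M. (k * c i m)\<^sup>2) = k\<^sup>2 * s"
        unfolding s_def by (simp add: power_mult_distrib sum_distrib_left)
      ultimately show ?thesis
        unfolding P_def using avg_exp_rademacher_double_sum_le[OF I M, of "\<lambda>i m. k * c i m"] by simp
    qed
    have "avg P (\<lambda>\<eta>. Z \<eta> ^ (2 * q))
        \<le> avg P (\<lambda>\<eta>. fact (2 * q) / l ^ (2 * q) * (exp (l * Z \<eta>) + exp (- l * Z \<eta>)))"
      using even_power_le_exp_sum[OF lp] by (intro avg_mono) simp
    also have "\<dots> = fact (2 * q) / l ^ (2 * q) * (avg P (\<lambda>\<eta>. exp (l * Z \<eta>)) + avg P (\<lambda>\<eta>. exp (- l * Z \<eta>)))"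
      by (simp only: avg_mult_left avg_add)
    also have "\<dots> \<le> fact (2 * q) / l ^ (2 * q) * (exp (l\<^sup>2 * s / 2) + exp ((- l)\<^sup>2 * s / 2))"
      by (intro mult_left_mono add_mono mgf) simp
    also have "\<dots> = fact (2 * q) / (2 * real q / s) ^ q * (2 * exp 1 ^ q)"
      using sp by (simp add: power_mult l2 exp_of_nat_mult[symmetric])
    also have "\<dots> \<le> 2 * (2 * exp 1 * real q * s) ^ q"
      by (rule fact_double_div_power_le[OF sp q])
    finally show ?thesis unfolding P_def Z_def s_def .
  qed
qed

lemma power_sum_le_weighted:
  fixes z w :: "'a \<Rightarrow> real"
  assumes S: "finite S" "S \<noteq> {}" and w: "\<And>l. l \<in> S \<Longrightarrow> w l > 0" "(\<Sum>l\<in>S. w l) = 1"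
    and z: "\<And>l. l \<in> S \<Longrightarrow> z l \<ge> 0"
  shows "(\<Sum>l\<in>S. z l) ^ q \<le> (\<Sum>l\<in>S. w l * (z l / w l) ^ q)"
proof -
  have "(\<Sum>l\<in>S. z l) = (\<Sum>l\<in>S. w l *\<^sub>R (z l / w l))"
    using w(1) by (intro sum.cong) (auto simp: less_imp_neq[symmetric])
  also have "\<dots> ^ q \<le> (\<Sum>l\<in>S. w l * (z l / w l) ^ q)"
    by (rule convex_on_sum[OF S convex_on_power_nonneg w(2)]) (use w z in \<open>auto intro: less_imp_le divide_nonneg_pos\<close>)
  finally show ?thesis .
qed

lemma avg_power_sum_le_of_moments:
  fixes Z :: "nat \<Rightarrow> 'a \<Rightarrow> real" and \<sigma> :: "nat \<Rightarrow> real"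
  assumes q: "q \<ge> 1" and C: "C \<ge> 0" and \<sigma>: "\<And>l. \<sigma> l \<ge> 0"
    and Z: "\<And>l p. Z l p \<ge> 0" "\<And>l p. \<sigma> l = 0 \<Longrightarrow> Z l p = 0"
    and moment: "\<And>l. avg P (\<lambda>p. Z l p ^ q) \<le> C * \<sigma> l ^ q"
  shows "avg P (\<lambda>p. (\<Sum>l<D. Z l p) ^ q) \<le> C * (\<Sum>l<D. \<sigma> l) ^ q"
proof -
  define S where "S = {l\<in>{..<D}. \<sigma> l > 0}"
  define s where "s = (\<Sum>l\<in>S. \<sigma> l)"
  have sum_S: "(\<Sum>l<D. h l) = (\<Sum>l\<in>S. h l)" if "\<And>l. \<sigma> l = 0 \<Longrightarrow> h l = 0" for h :: "nat \<Rightarrow> real"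
    unfolding S_def using that \<sigma> by (intro sum.mono_neutral_right) (auto simp: less_le)
  have S: "finite S" unfolding S_def by simp
  show ?thesis
  proof (cases "S = {}")
    case True
    then have "(\<Sum>l<D. Z l p) = 0" for p using sum_S[of "\<lambda>l. Z l p"] Z(2) by simp
    then show ?thesis using q C \<sigma> by (simp add: avg_def sum_nonneg power_0_left)
  next
    case False
    \<comment> \<open>Minkowski's inequality in \<open>L\<^sup>q\<close>, via convexity with the weights \<open>\<sigma> l / s\<close>\<close>
    define w where "w l = \<sigma> l / s" for l
    have s: "s > 0" unfolding s_def using S False by (intro sum_pos) (auto simp: S_def)
    have w: "w l > 0" if "l \<in> S" for l using that s unfolding w_def S_def by simp
    have w1: "(\<Sum>l\<in>S. w l) = 1" using s unfolding w_def s_def by (simp add: sum_divide_distrib[symmetric])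
    have "avg P (\<lambda>p. (\<Sum>l<D. Z l p) ^ q) \<le> avg P (\<lambda>p. \<Sum>l\<in>S. w l * (Z l p / w l) ^ q)"
    proof (intro avg_mono)
      fix p
      have "(\<Sum>l<D. Z l p) = (\<Sum>l\<in>S. Z l p)" using Z(2) by (intro sum_S)
      then show "(\<Sum>l<D. Z l p) ^ q \<le> (\<Sum>l\<in>S. w l * (Z l p / w l) ^ q)"
        using power_sum_le_weighted[OF S False w w1, of "\<lambda>l. Z l p" q] Z(1) by simp
    qed
    also have "\<dots> = (\<Sum>l\<in>S. w l * (avg P (\<lambda>p. Z l p ^ q) / w l ^ q))"
      by (simp only: avg_sum avg_mult_left avg_divide power_divide)
    also have "\<dots> \<le> (\<Sum>l\<in>S. w l * (C * \<sigma> l ^ q / w l ^ q))"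
      using w by (intro sum_mono mult_left_mono divide_right_mono moment) (auto intro!: less_imp_le)
    also have "\<dots> = (\<Sum>l\<in>S. w l * (C * s ^ q))"
      using s w by (intro sum.cong refl) (simp add: w_def power_divide)
    also have "\<dots> = C * (\<Sum>l<D. \<sigma> l) ^ q"
      unfolding sum_distrib_right[symmetric] w1 s_def by (simp add: sum_S)
    finally show ?thesis .
  qed
qed

lemma avg_rademacher_norm_even_moment:
  fixes D :: nat
  assumes I: "finite I" and M: "finite M" and q: "q \<ge> 1"
  shows "avg (PiE I (\<lambda>_. signs M)) (\<lambda>\<eta>. (\<Sum>l<D. (\<Sum>i\<in>I. \<Sum>m\<in>M. \<eta> i m * c l i m)\<^sup>2) ^ q)
    \<le> 2 * (2 * exp 1 * real q * (\<Sum>l<D. \<Sum>i\<in>I. \<Sum>m\<in>M. (c l i m)\<^sup>2)) ^ q"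
proof -
  have zero: "(\<Sum>i\<in>I. \<Sum>m\<in>M. \<eta> i m * c l i m)\<^sup>2 = 0"
    if "(\<Sum>i\<in>I. \<Sum>m\<in>M. (c l i m)\<^sup>2) = 0" for l \<eta>
    using that I M by (simp add: sum_nonneg_eq_0_iff sum_nonneg)
  have moment: "avg (PiE I (\<lambda>_. signs M)) (\<lambda>\<eta>. ((\<Sum>i\<in>I. \<Sum>m\<in>M. \<eta> i m * c l i m)\<^sup>2) ^ q)
      \<le> (2 * (2 * exp 1 * real q) ^ q) * (\<Sum>i\<in>I. \<Sum>m\<in>M. (c l i m)\<^sup>2) ^ q" for l
    using avg_rademacher_double_sum_even_moment[OF I M q, of "c l"]
    unfolding power_mult by (simp only: power_mult_distrib mult_ac)
  have "avg (PiE I (\<lambda>_. signs M)) (\<lambda>\<eta>. (\<Sum>l<D. (\<Sum>i\<in>I. \<Sum>m\<in>M. \<eta> i m * c l i m)\<^sup>2) ^ q)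
      \<le> (2 * (2 * exp 1 * real q) ^ q) * (\<Sum>l<D. \<Sum>i\<in>I. \<Sum>m\<in>M. (c l i m)\<^sup>2) ^ q"
    by (rule avg_power_sum_le_of_moments[OF q _ _ _ zero moment]) (auto intro!: sum_nonneg)
  then show ?thesis by (simp add: power_mult_distrib mult_ac)
qed

lemma ln_ge_two_thirds: "2 \<le> x \<Longrightarrow> 2/3 \<le> ln (x::real)"
  using ln2_ge_two_thirds ln_le_cancel_iff[of 2 x] by linarith

lemma avg_Max_sqrt_power_le:
  assumes P: "finite P" "P \<noteq> {}" and k: "k \<ge> 1" and N: "\<And>j p. N j p \<ge> 0"
    and moment: "\<And>j. j < k \<Longrightarrow> avg P (\<lambda>p. N j p ^ q) \<le> C"
  shows "avg P (\<lambda>p. Max ((\<lambda>j. sqrt (N j p)) ` {..<k})) ^ (2 * q) \<le> real k * C"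
    and "0 \<le> avg P (\<lambda>p. Max ((\<lambda>j. sqrt (N j p)) ` {..<k}))"
proof -
  define Y where "Y p = Max ((\<lambda>j. sqrt (N j p)) ` {..<k})" for p
  have Y: "Y p ^ (2 * q) \<le> (\<Sum>j<k. N j p ^ q)" "Y p \<ge> 0" for p
  proof -
    have "Y p \<in> (\<lambda>j. sqrt (N j p)) ` {..<k}"
      unfolding Y_def using k by (intro Max_in) (auto simp: lessThan_empty_iff)
    then obtain j where j: "j < k" "Y p = sqrt (N j p)" by auto
    then have "Y p ^ (2 * q) = N j p ^ q"
      using N by (simp add: power_mult)
    also have "\<dots> \<le> (\<Sum>j<k. N j p ^ q)"
      using j N by (intro member_le_sum) auto
    finally show "Y p ^ (2 * q) \<le> (\<Sum>j<k. N j p ^ q)" .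
    show "Y p \<ge> 0" using j N by simp
  qed
  have "avg P Y ^ (2 * q) \<le> avg P (\<lambda>p. Y p ^ (2 * q))"
    by (rule avg_power_le[OF P Y(2)])
  also have "\<dots> \<le> (\<Sum>j<k. avg P (\<lambda>p. N j p ^ q))"
    unfolding avg_sum[symmetric] by (intro avg_mono Y(1))
  also have "\<dots> \<le> real k * C"
    using sum_mono[of "{..<k}", OF moment] by simp
  finally show "avg P (\<lambda>p. Max ((\<lambda>j. sqrt (N j p)) ` {..<k})) ^ (2 * q) \<le> real k * C"
    unfolding Y_def .
  show "0 \<le> avg P (\<lambda>p. Max ((\<lambda>j. sqrt (N j p)) ` {..<k}))"
    using Y(2) unfolding Y_def by (rule avg_nonneg)
qed

lemma avg_Max_rademacher_norm_le:
  fixes k D :: nat and y :: "nat \<Rightarrow> nat \<Rightarrow> 'i \<Rightarrow> 'm \<Rightarrow> real"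
  assumes I: "finite I" and M: "finite M" and k: "k \<ge> 1"
    and s2: "\<And>j. j < k \<Longrightarrow> (\<Sum>l<D. \<Sum>i\<in>I. \<Sum>m\<in>M. (y j l i m)\<^sup>2) \<le> s2"
  shows "avg (PiE I (\<lambda>_. signs M)) (\<lambda>\<eta>. Max ((\<lambda>j. sqrt (\<Sum>l<D. (\<Sum>i\<in>I. \<Sum>m\<in>M. \<eta> i m * y j l i m)\<^sup>2)) ` {..<k}))
     \<le> exp 1 * sqrt (6 * ln (2 * real k) * s2)"
    (is "?E \<le> _")
proof -
  \<comment> \<open>a moment of order \<open>2q \<approx> 2 ln (2k)\<close> makes the maximum over the \<open>k\<close> columns cost only a constant\<close>
  define q where "q = nat \<lceil>ln (2 * real k)\<rceil>"
  have lnk: "ln (2 * real k) \<ge> 2/3" using k by (intro ln_ge_two_thirds) simp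
  have q: "q \<ge> 1" "ln (2 * real k) \<le> real q" "real q \<le> ln (2 * real k) + 1"
    unfolding q_def using lnk by linarith+
  have "0 \<le> (\<Sum>l<D. \<Sum>i\<in>I. \<Sum>m\<in>M. (y 0 l i m)\<^sup>2)" by (intro sum_nonneg) auto
  then have s20: "s2 \<ge> 0" using s2[of 0] k by linarith
  have "2 * real k \<le> exp (real q)"
    using q(2) k exp_le_cancel_iff[of "ln (2 * real k)" "real q"] by simp
  then have k_le: "2 * real k \<le> exp 1 ^ q" by (simp add: exp_of_nat_mult[symmetric])
  have moment: "avg (PiE I (\<lambda>_. signs M)) (\<lambda>\<eta>. (\<Sum>l<D. (\<Sum>i\<in>I. \<Sum>m\<in>M. \<eta> i m * y j l i m)\<^sup>2) ^ q)
      \<le> 2 * (2 * exp 1 * real q * s2) ^ q" if "j < k" for j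
    using avg_rademacher_norm_even_moment[OF I M q(1), where D = D and c = "y j"] s2[OF that]
    by (smt (verit) mult_left_mono power_mono sum_nonneg zero_le_power2 exp_ge_zero of_nat_0_le_iff
        mult_nonneg_nonneg)
  have P: "finite (PiE I (\<lambda>_. signs M))" "PiE I (\<lambda>_. signs M) \<noteq> {}"
    using I M by (auto simp: finite_PiE finite_signs PiE_eq_empty_iff signs_nonempty)
  have E0: "0 \<le> ?E"
    by (rule avg_Max_sqrt_power_le(2)[OF P k _ moment]) (simp add: sum_nonneg)
  have "?E ^ (2 * q) \<le> real k * (2 * (2 * exp 1 * real q * s2) ^ q)"
    by (rule avg_Max_sqrt_power_le(1)[OF P k _ moment]) (simp add: sum_nonneg)
  also have "\<dots> = (2 * real k) * exp 1 ^ q * (2 * real q * s2) ^ q"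
    by (simp add: power_mult_distrib)
  also have "\<dots> \<le> exp 1 ^ q * exp 1 ^ q * (2 * real q * s2) ^ q"
    using k_le s20 by (intro mult_right_mono) auto
  also have "\<dots> = ((exp 1)\<^sup>2 * (2 * real q * s2)) ^ q"
    by (simp add: power_mult_distrib power2_eq_square)
  also have "\<dots> = (exp 1 * sqrt (2 * real q * s2)) ^ (2 * q)"
    using s20 by (simp add: power_mult power_mult_distrib)
  finally have "?E \<le> exp 1 * sqrt (2 * real q * s2)"
    using power_mono_iff[of ?E "exp 1 * sqrt (2 * real q * s2)" "2 * q"] q(1) s20 E0
    by simp
  also have "\<dots> \<le> exp 1 * sqrt (6 * ln (2 * real k) * s2)"
    using q(3) lnk s20 by (intro mult_left_mono real_sqrt_le_mono mult_right_mono) auto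
  finally show ?thesis .
qed

section \<open>Vector and matrix norms\<close>

lemma vnorm_eq_L2_set: "vnorm m v = L2_set v {..<m}"
  unfolding vnorm_def L2_set_def by simp

lemma vnorm_nonneg: "vnorm m v \<ge> 0"
  unfolding vnorm_def by (simp add: sum_nonneg)

lemma vnorm_square: "(vnorm m v)\<^sup>2 = (\<Sum>i<m. (v i)\<^sup>2)"
  unfolding vnorm_def by (simp add: sum_nonneg)

lemma abs_sum_mult_le_L2_set:
  fixes u v :: "'b \<Rightarrow> real"
  shows "\<bar>\<Sum>j\<in>S. u j * v j\<bar> \<le> L2_set u S * L2_set v S"
proof -
  have "\<bar>\<Sum>j\<in>S. u j * v j\<bar> \<le> (\<Sum>j\<in>S. \<bar>u j\<bar> * \<bar>v j\<bar>)"
    unfolding abs_mult[symmetric] by (rule sum_abs)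
  also have "\<dots> \<le> L2_set u S * L2_set v S" by (rule L2_set_mult_ineq)
  finally show ?thesis .
qed

lemma abs_sum_mult_le_vnorm: "\<bar>\<Sum>j<m. u j * v j\<bar> \<le> vnorm m u * vnorm m v"
  unfolding vnorm_eq_L2_set by (rule abs_sum_mult_le_L2_set)

lemma vnorm_mat_apply_le_frobenius:
  "vnorm d (mat_apply k A y) \<le> sqrt (\<Sum>l<d. \<Sum>j<k. (A l j)\<^sup>2) * vnorm k y"
proof -
  have "(mat_apply k A y l)\<^sup>2 \<le> (\<Sum>j<k. (A l j)\<^sup>2) * (vnorm k y)\<^sup>2" for l
    using power_mono[OF abs_sum_mult_le_vnorm[where m = k and u = "A l" and v = y], of 2]
    unfolding mat_apply_def by (simp add: power_mult_distrib vnorm_square)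
  then have "(\<Sum>l<d. (mat_apply k A y l)\<^sup>2) \<le> (\<Sum>l<d. \<Sum>j<k. (A l j)\<^sup>2) * (vnorm k y)\<^sup>2"
    by (simp add: sum_distrib_right sum_mono)
  then have "sqrt (\<Sum>l<d. (mat_apply k A y l)\<^sup>2) \<le> sqrt ((\<Sum>l<d. \<Sum>j<k. (A l j)\<^sup>2) * (vnorm k y)\<^sup>2)"
    by (rule real_sqrt_le_mono)
  then show ?thesis
    unfolding vnorm_def[of d] using vnorm_nonneg[of k y] by (simp add: real_sqrt_mult)
qed

lemma vnorm_mat_apply_le_opnorm:
  assumes "opnorm d k A \<le> a'"
  shows "vnorm d (mat_apply k A y) \<le> a' * vnorm k y"
proof -
  define S where "S = {vnorm d (mat_apply k A y) | y. vnorm k y \<le> 1}"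
  \<comment> \<open>otherwise the supremum defining \<open>opnorm\<close> would be a junk value\<close>
  have bdd: "bdd_above S"
  proof
    fix t assume "t \<in> S"
    then obtain y where "t = vnorm d (mat_apply k A y)" "vnorm k y \<le> 1" unfolding S_def by blast
    then show "t \<le> sqrt (\<Sum>l<d. \<Sum>j<k. (A l j)\<^sup>2)"
      using vnorm_mat_apply_le_frobenius[of d k A y]
      by (smt (verit) mult_left_le real_sqrt_ge_zero sum_nonneg zero_le_power2)
  qed
  have unit: "vnorm d (mat_apply k A y) \<le> a'" if "vnorm k y \<le> 1" for y
  proof -
    have "vnorm d (mat_apply k A y) \<le> Sup S"
      using that bdd unfolding S_def by (intro cSup_upper) auto
    then show ?thesis using assms unfolding opnorm_def S_def by simp
  qed
  show ?thesis
  proof (cases "vnorm k y = 0")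
    case True
    then have "\<forall>j\<in>{..<k}. y j = 0" unfolding vnorm_def by (simp add: sum_nonneg_eq_0_iff)
    then have "mat_apply k A y = (\<lambda>l. 0)" unfolding mat_apply_def by simp
    then show ?thesis using True by (simp add: vnorm_def)
  next
    case False
    define r where "r = vnorm k y"
    have r: "r > 0" using False vnorm_nonneg[of k y] unfolding r_def by simp
    have scale: "vnorm m (\<lambda>l. v l / r) = vnorm m v / r" for m v
      unfolding vnorm_eq_L2_set using r L2_set_right_distrib[of "1/r" v "{..<m}"] by simp
    have "mat_apply k A (\<lambda>j. y j / r) = (\<lambda>l. mat_apply k A y l / r)"
      unfolding mat_apply_def by (simp add: sum_divide_distrib)
    then have "vnorm d (mat_apply k A y) / r \<le> a'"
      using unit[of "\<lambda>j. y j / r"] scale[of d "mat_apply k A y"] scale[of k y] r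
      unfolding r_def by simp
    then show ?thesis using r unfolding r_def by (simp add: field_simps)
  qed
qed

lemma vnorm_matT_apply_le_opnorm:
  assumes "opnorm d k A \<le> a'" "a' \<ge> 0"
  shows "vnorm k (matT_apply d A z) \<le> a' * vnorm d z"
proof -
  define w where "w = matT_apply d A z"
  \<comment> \<open>duality: \<open>\<parallel>A\<^sup>t z\<parallel>\<^sup>2 = \<langle>z, A A\<^sup>t z\<rangle>\<close>\<close>
  have "(vnorm k w)\<^sup>2 = (\<Sum>l<d. z l * mat_apply k A w l)"
    unfolding vnorm_square mat_apply_def
    by (simp add: w_def matT_apply_def power2_eq_square sum_distrib_left sum_distrib_right
        sum.swap[of _ "{..<k}"] mult_ac)
  also have "\<dots> \<le> vnorm d z * vnorm d (mat_apply k A w)"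
    using abs_sum_mult_le_vnorm[where m = d and u = z and v = "mat_apply k A w"] by linarith
  also have "\<dots> \<le> vnorm d z * (a' * vnorm k w)"
    by (intro mult_left_mono vnorm_mat_apply_le_opnorm assms vnorm_nonneg)
  finally have "vnorm k w * vnorm k w \<le> (a' * vnorm d z) * vnorm k w"
    by (simp add: power2_eq_square mult_ac)
  show ?thesis
  proof (cases "vnorm k w = 0")
    case True
    then show ?thesis using assms(2) vnorm_nonneg[of d z] unfolding w_def by simp
  next
    case False
    then have "vnorm k w > 0" using vnorm_nonneg[of k w] by simp
    with \<open>vnorm k w * vnorm k w \<le> (a' * vnorm d z) * vnorm k w\<close> show ?thesis
      unfolding w_def by simp
  qed
qed

lemma vnorm_column_le_norm21: "j < k \<Longrightarrow> vnorm d (\<lambda>l. A l j) \<le> norm21 d k A"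
  unfolding norm21_def by (intro member_le_sum) (auto simp: vnorm_nonneg)

lemma abs_matT_apply_le_norm21:
  assumes "j < k"
  shows "\<bar>matT_apply d A z j\<bar> \<le> norm21 d k A * vnorm d z"
proof -
  have "\<bar>matT_apply d A z j\<bar> \<le> vnorm d (\<lambda>l. A l j) * vnorm d z"
    unfolding matT_apply_def using abs_sum_mult_le_vnorm[where m = d and u = "\<lambda>l. A l j" and v = z] by simp
  also have "\<dots> \<le> norm21 d k A * vnorm d z"
    by (intro mult_right_mono vnorm_column_le_norm21 assms vnorm_nonneg)
  finally show ?thesis .
qed

lemma matT_apply_diff: "matT_apply d A u j - matT_apply d A v j = matT_apply d A (\<lambda>l. u l - v l) j"
  unfolding matT_apply_def by (simp add: sum_subtractf[symmetric] algebra_simps)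

lemma zero_in_Jset: "0 \<le> a \<Longrightarrow> 0 \<le> a' \<Longrightarrow> (\<lambda>_ _. 0) \<in> Jset d k a a'"
proof -
  assume "0 \<le> a" "0 \<le> a'"
  have "{vnorm d (mat_apply k (\<lambda>_ _. 0) y) |y. vnorm k y \<le> 1} = {0}"
    by (auto simp: vnorm_def mat_apply_def intro!: exI[of _ "\<lambda>_. 0"])
  then show ?thesis
    using \<open>0 \<le> a\<close> \<open>0 \<le> a'\<close> by (simp add: Jset_def opnorm_def norm21_def vnorm_def)
qed

lemma square_diff_le: "((p::real) - q)\<^sup>2 \<le> 2 * p\<^sup>2 + 2 * q\<^sup>2"
  using zero_le_power2[of "p + q"] by (simp add: power2_eq_square algebra_simps)

lemma square_add_le: "((p::real) + q)\<^sup>2 \<le> 2 * p\<^sup>2 + 2 * q\<^sup>2"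
  using square_diff_le[of p "-q"] by simp

section \<open>The class \<open>F\<^sub>k\<close>\<close>

lemma sum_Plus_lessThan:
  "(\<Sum>m\<in>{..<k::nat} <+> {..<k}. h m) = (\<Sum>j<k. h (Inl j)) + (\<Sum>j<k. h (Inr j))"
  by (simp add: sum.Plus comp_def)

locale Fk_setting =
  fixes n d k :: nat and \<phi> :: "real \<Rightarrow> real" and L b :: real and x x' :: "nat \<Rightarrow> nat \<Rightarrow> real"
    and a a' :: real
  assumes k1: "1 \<le> k" and lip: "L-lipschitz_on UNIV \<phi>"
    and xb: "\<And>i. i < n \<Longrightarrow> vnorm d (x i) \<le> b \<and> vnorm d (x' i) \<le> b"
    and a0: "0 \<le> a" and a'0: "0 \<le> a'" and b0: "0 \<le> b"
begin

abbreviation "J \<equiv> Jset d k a a'"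
abbreviation "M \<equiv> {..<k} <+> {..<k}"

definition "loss i A = zeta k (\<lambda>j. \<phi> (matT_apply d A (x i) j)) (\<lambda>j. \<phi> (matT_apply d A (x' i) j))"
definition "phi_gap i A j = \<phi> (matT_apply d A (x i) j) - \<phi> (matT_apply d A (x' i) j)"
definition "features i A = case_sum (matT_apply d A (x i)) (matT_apply d A (x' i))"
definition "\<kappa> = 8 * L\<^sup>2 * a' * b / real k"

lemma L_nonneg: "L \<ge> 0" using lipschitz_on_nonneg[OF lip] .

lemma \<kappa>_nonneg: "\<kappa> \<ge> 0" unfolding \<kappa>_def using L_nonneg a'0 b0 by simp

lemma phi_lipschitz: "\<bar>\<phi> s - \<phi> t\<bar> \<le> L * \<bar>s - t\<bar>"
  using lipschitz_onD[OF lip, of s t] by (simp add: dist_real_def)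

lemma loss_eq: "loss i A = (\<Sum>j<k. (phi_gap i A j)\<^sup>2) / real k"
  unfolding loss_def zeta_def phi_gap_def by simp

lemma norms_of_in_J: "A \<in> J \<Longrightarrow> norm21 d k A \<le> a \<and> opnorm d k A \<le> a'"
  unfolding Jset_def by simp

lemma sum_square_phi_gap_le:
  assumes A: "A \<in> J" and i: "i < n"
  shows "(\<Sum>j<k. (phi_gap i A j)\<^sup>2) \<le> 4 * L\<^sup>2 * a'\<^sup>2 * b\<^sup>2"
proof -
  define z where "z = (\<lambda>l. x i l - x' i l)"
  have "(vnorm d z)\<^sup>2 = (\<Sum>l<d. (x i l - x' i l)\<^sup>2)" unfolding z_def vnorm_square ..
  also have "\<dots> \<le> (\<Sum>l<d. 2 * (x i l)\<^sup>2 + 2 * (x' i l)\<^sup>2)"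
    by (intro sum_mono square_diff_le)
  also have "\<dots> = 2 * (vnorm d (x i))\<^sup>2 + 2 * (vnorm d (x' i))\<^sup>2"
    by (simp add: vnorm_square sum.distrib sum_distrib_left)
  also have "\<dots> \<le> 2 * b\<^sup>2 + 2 * b\<^sup>2"
    using xb[OF i] vnorm_nonneg by (intro add_mono mult_left_mono power_mono) auto
  finally have z: "(vnorm d z)\<^sup>2 \<le> 4 * b\<^sup>2" by simp
  have "(\<Sum>j<k. (phi_gap i A j)\<^sup>2) \<le> (\<Sum>j<k. L\<^sup>2 * (matT_apply d A z j)\<^sup>2)"
  proof (intro sum_mono)
    fix j
    have "\<bar>phi_gap i A j\<bar> \<le> L * \<bar>matT_apply d A z j\<bar>"
      unfolding phi_gap_def z_def matT_apply_diff[symmetric] by (rule phi_lipschitz)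
    then have "\<bar>phi_gap i A j\<bar>\<^sup>2 \<le> (L * \<bar>matT_apply d A z j\<bar>)\<^sup>2" by (intro power_mono) auto
    then show "(phi_gap i A j)\<^sup>2 \<le> L\<^sup>2 * (matT_apply d A z j)\<^sup>2" by (simp add: power_mult_distrib)
  qed
  also have "\<dots> = L\<^sup>2 * (vnorm k (matT_apply d A z))\<^sup>2"
    by (simp add: vnorm_square sum_distrib_left)
  also have "\<dots> \<le> L\<^sup>2 * (a' * vnorm d z)\<^sup>2"
    using vnorm_matT_apply_le_opnorm[of d k A a' z] norms_of_in_J[OF A] a'0 vnorm_nonneg
    by (intro mult_left_mono power_mono) auto
  also have "\<dots> = L\<^sup>2 * a'\<^sup>2 * (vnorm d z)\<^sup>2"
    by (simp add: power_mult_distrib)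
  also have "\<dots> \<le> L\<^sup>2 * a'\<^sup>2 * (4 * b\<^sup>2)"
    using z by (intro mult_left_mono) simp_all
  finally show ?thesis by simp
qed

lemma bounded_loss: "i < n \<Longrightarrow> bounded (loss i ` J)"
  unfolding bounded_real loss_eq using sum_square_phi_gap_le k1
  by (intro exI[of _ "4 * L\<^sup>2 * a'\<^sup>2 * b\<^sup>2 / real k"]) (auto simp: sum_nonneg divide_right_mono)

lemma bounded_features: "i < n \<Longrightarrow> m \<in> M \<Longrightarrow> bounded ((\<lambda>A. features i A m) ` J)"
proof -
  assume i: "i < n" and m: "m \<in> M"
  have "\<bar>features i A m\<bar> \<le> a * b" if A: "A \<in> J" for A
  proof -
    have "\<bar>matT_apply d A z j\<bar> \<le> a * b" if "j < k" "vnorm d z \<le> b" for z j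
      using abs_matT_apply_le_norm21[OF that(1), of d A z]
        mult_mono[OF conjunct1[OF norms_of_in_J[OF A]] that(2) a0 vnorm_nonneg] by linarith
    then show ?thesis using m xb[OF i] unfolding features_def by (cases m) auto
  qed
  then show ?thesis unfolding bounded_real by blast
qed

lemma sum_square_phi_gap_diff_le:
  "(\<Sum>j<k. (phi_gap i A j - phi_gap i B j)\<^sup>2) \<le> 2 * L\<^sup>2 * (\<Sum>m\<in>M. (features i A m - features i B m)\<^sup>2)"
proof -
  have sq: "(\<phi> s - \<phi> t)\<^sup>2 \<le> L\<^sup>2 * (s - t)\<^sup>2" for s t
    using power_mono[OF phi_lipschitz[of s t], of 2] by (simp add: power_mult_distrib)
  let ?u = "\<lambda>C j. matT_apply d C (x i) j" and ?u' = "\<lambda>C j. matT_apply d C (x' i) j"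
  have "(\<Sum>j<k. (phi_gap i A j - phi_gap i B j)\<^sup>2)
      \<le> (\<Sum>j<k. 2 * L\<^sup>2 * (?u A j - ?u B j)\<^sup>2 + 2 * L\<^sup>2 * (?u' A j - ?u' B j)\<^sup>2)"
  proof (intro sum_mono)
    fix j
    have gap: "phi_gap i A j - phi_gap i B j = (\<phi> (?u A j) - \<phi> (?u B j)) - (\<phi> (?u' A j) - \<phi> (?u' B j))"
      unfolding phi_gap_def by simp
    show "(phi_gap i A j - phi_gap i B j)\<^sup>2
        \<le> 2 * L\<^sup>2 * (?u A j - ?u B j)\<^sup>2 + 2 * L\<^sup>2 * (?u' A j - ?u' B j)\<^sup>2"
      unfolding gap using square_diff_le[of "\<phi> (?u A j) - \<phi> (?u B j)" "\<phi> (?u' A j) - \<phi> (?u' B j)"]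
        sq[of "?u A j" "?u B j"] sq[of "?u' A j" "?u' B j"] by linarith
  qed
  also have "\<dots> = 2 * L\<^sup>2 * (\<Sum>m\<in>M. (features i A m - features i B m)\<^sup>2)"
    unfolding sum_Plus_lessThan features_def by (simp add: sum.distrib sum_distrib_left algebra_simps)
  finally show ?thesis .
qed

lemma sum_square_phi_gap_add_le:
  assumes i: "i < n" and A: "A \<in> J" and B: "B \<in> J"
  shows "(\<Sum>j<k. (phi_gap i A j + phi_gap i B j)\<^sup>2) \<le> 16 * L\<^sup>2 * a'\<^sup>2 * b\<^sup>2"
proof -
  have "(\<Sum>j<k. (phi_gap i A j + phi_gap i B j)\<^sup>2) \<le> (\<Sum>j<k. 2 * (phi_gap i A j)\<^sup>2 + 2 * (phi_gap i B j)\<^sup>2)"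
    by (intro sum_mono square_add_le)
  also have "\<dots> \<le> 2 * (4 * L\<^sup>2 * a'\<^sup>2 * b\<^sup>2) + 2 * (4 * L\<^sup>2 * a'\<^sup>2 * b\<^sup>2)"
    using sum_square_phi_gap_le[OF A i] sum_square_phi_gap_le[OF B i]
    by (simp add: sum.distrib sum_distrib_left[symmetric])
  finally show ?thesis by simp
qed

lemma loss_lipschitz:
  assumes i: "i < n" and A: "A \<in> J" and B: "B \<in> J"
  shows "\<bar>loss i A - loss i B\<bar> \<le> L2_set (\<lambda>m. \<kappa> * features i A m - \<kappa> * features i B m) M"
proof -
  define \<alpha> where "\<alpha> = (\<Sum>j<k. (phi_gap i A j - phi_gap i B j)\<^sup>2)"
  define \<beta> where "\<beta> = (\<Sum>j<k. (phi_gap i A j + phi_gap i B j)\<^sup>2)"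
  define \<gamma> where "\<gamma> = (\<Sum>m\<in>M. (features i A m - features i B m)\<^sup>2)"
  have \<gamma>: "0 \<le> \<gamma>" unfolding \<gamma>_def by (intro sum_nonneg) auto
  have \<alpha>: "0 \<le> \<alpha>" "\<alpha> \<le> 2 * L\<^sup>2 * \<gamma>"
    unfolding \<alpha>_def \<gamma>_def by (auto intro: sum_nonneg sum_square_phi_gap_diff_le)
  have \<beta>: "0 \<le> \<beta>" "\<beta> \<le> 16 * L\<^sup>2 * a'\<^sup>2 * b\<^sup>2"
    unfolding \<beta>_def by (auto intro: sum_nonneg sum_square_phi_gap_add_le[OF i A B])
  have "\<alpha> * \<beta> \<le> (2 * L\<^sup>2 * \<gamma>) * (16 * L\<^sup>2 * a'\<^sup>2 * b\<^sup>2)"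
    using \<alpha> \<beta> \<gamma> by (intro mult_mono) auto
  also have "\<dots> = 32 * ((L\<^sup>2 * a' * b)\<^sup>2 * \<gamma>)"
    by algebra
  also have "\<dots> \<le> 64 * ((L\<^sup>2 * a' * b)\<^sup>2 * \<gamma>)"
    using \<gamma> by simp
  also have "\<dots> = (8 * L\<^sup>2 * a' * b)\<^sup>2 * \<gamma>"
    by (simp add: power2_eq_square)
  finally have "sqrt (\<alpha> * \<beta>) \<le> sqrt ((8 * L\<^sup>2 * a' * b)\<^sup>2 * \<gamma>)"
    by (rule real_sqrt_le_mono)
  then have \<alpha>\<beta>: "sqrt \<alpha> * sqrt \<beta> \<le> 8 * L\<^sup>2 * a' * b * sqrt \<gamma>"
    using a'0 b0 by (simp add: real_sqrt_mult)
  \<comment> \<open>\<open>s\<^sup>2 - t\<^sup>2 = (s - t)(s + t)\<close>, then Cauchy--Schwarz\<close>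
  have "loss i A - loss i B = (\<Sum>j<k. (phi_gap i A j - phi_gap i B j) * (phi_gap i A j + phi_gap i B j)) / real k"
    unfolding loss_eq diff_divide_distrib[symmetric] sum_subtractf[symmetric]
    by (intro arg_cong[where f = "\<lambda>t. t / real k"] sum.cong) (simp_all add: power2_eq_square algebra_simps)
  then have "\<bar>loss i A - loss i B\<bar> \<le> sqrt \<alpha> * sqrt \<beta> / real k"
    using abs_sum_mult_le_L2_set[of "\<lambda>j. phi_gap i A j - phi_gap i B j" "\<lambda>j. phi_gap i A j + phi_gap i B j" "{..<k}"]
    unfolding \<alpha>_def \<beta>_def L2_set_def by (simp add: divide_right_mono)
  also have "\<dots> \<le> \<kappa> * sqrt \<gamma>"
    using \<alpha>\<beta> unfolding \<kappa>_def by (simp add: divide_right_mono)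
  also have "\<dots> = L2_set (\<lambda>m. \<kappa> * features i A m - \<kappa> * features i B m) M"
    unfolding \<gamma>_def L2_set_def right_diff_distrib[symmetric] power_mult_distrib sum_distrib_left[symmetric]
    using \<kappa>_nonneg by (simp add: real_sqrt_mult)
  finally show ?thesis .
qed

(* col_sum \<eta> j is the Rademacher vector T\<^sub>j(\<eta>) = \<Sum>\<^sub>i (\<eta> i (Inl j) x\<^sub>i + \<eta> i (Inr j) x'\<^sub>i), written
   through coef so that the moment bounds for sums \<Sum>\<^sub>i \<Sum>\<^sub>m \<eta> i m * c i m apply to it. *)
definition "coef j l i m =
  case_sum (\<lambda>j'. if j' = j then x i l else 0) (\<lambda>j'. if j' = j then x' i l else 0) m"
definition "col_sum \<eta> j l = (\<Sum>i<n. \<Sum>m\<in>M. \<eta> i m * coef j l i m)"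
definition "max_col_norm \<eta> = Max ((\<lambda>j. vnorm d (col_sum \<eta> j)) ` {..<k})"

lemma col_sum_eq: "j < k \<Longrightarrow> col_sum \<eta> j l = (\<Sum>i<n. \<eta> i (Inl j) * x i l + \<eta> i (Inr j) * x' i l)"
  unfolding col_sum_def coef_def sum_Plus_lessThan by (simp add: if_distrib cong: if_cong)

lemma vnorm_col_sum_le: "j < k \<Longrightarrow> vnorm d (col_sum \<eta> j) \<le> max_col_norm \<eta>"
  unfolding max_col_norm_def by (intro Max_ge) auto

lemma max_col_norm_nonneg: "max_col_norm \<eta> \<ge> 0"
  using vnorm_col_sum_le[of 0 \<eta>] vnorm_nonneg[of d "col_sum \<eta> 0"] k1 by simp

lemma features_process_eq:
  "(\<Sum>i<n. \<Sum>m\<in>M. \<eta> i m * features i A m) = (\<Sum>j<k. \<Sum>l<d. A l j * col_sum \<eta> j l)"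
proof -
  have "(\<Sum>m\<in>M. \<eta> i m * features i A m)
      = (\<Sum>j<k. \<Sum>l<d. A l j * (\<eta> i (Inl j) * x i l + \<eta> i (Inr j) * x' i l))" for i
    unfolding sum_Plus_lessThan features_def matT_apply_def sum.distrib[symmetric]
    by (simp add: sum_distrib_left distrib_left mult_ac sum.distrib)
  then have "(\<Sum>i<n. \<Sum>m\<in>M. \<eta> i m * features i A m)
      = (\<Sum>i<n. \<Sum>j<k. \<Sum>l<d. A l j * (\<eta> i (Inl j) * x i l + \<eta> i (Inr j) * x' i l))"
    by simp
  also have "\<dots> = (\<Sum>j<k. \<Sum>l<d. \<Sum>i<n. A l j * (\<eta> i (Inl j) * x i l + \<eta> i (Inr j) * x' i l))"
    by (rule trans[OF sum.swap], rule sum.cong[OF refl], rule sum.swap)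
  also have "\<dots> = (\<Sum>j<k. \<Sum>l<d. A l j * col_sum \<eta> j l)"
    by (intro sum.cong refl) (simp add: col_sum_eq sum_distrib_left)
  finally show ?thesis .
qed

lemma features_process_le:
  assumes A: "A \<in> J"
  shows "(\<Sum>i<n. \<Sum>m\<in>M. \<eta> i m * features i A m) \<le> a * max_col_norm \<eta>"
proof -
  have "(\<Sum>j<k. \<Sum>l<d. A l j * col_sum \<eta> j l) \<le> (\<Sum>j<k. vnorm d (\<lambda>l. A l j) * max_col_norm \<eta>)"
  proof (intro sum_mono)
    fix j assume j: "j \<in> {..<k}"
    have "(\<Sum>l<d. A l j * col_sum \<eta> j l) \<le> vnorm d (\<lambda>l. A l j) * vnorm d (col_sum \<eta> j)"
      using abs_sum_mult_le_vnorm[where m = d and u = "\<lambda>l. A l j" and v = "col_sum \<eta> j"] by linarith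
    also have "\<dots> \<le> vnorm d (\<lambda>l. A l j) * max_col_norm \<eta>"
      using j by (intro mult_left_mono vnorm_col_sum_le vnorm_nonneg) auto
    finally show "(\<Sum>l<d. A l j * col_sum \<eta> j l) \<le> vnorm d (\<lambda>l. A l j) * max_col_norm \<eta>" .
  qed
  also have "\<dots> = norm21 d k A * max_col_norm \<eta>" unfolding norm21_def by (simp add: sum_distrib_right)
  also have "\<dots> \<le> a * max_col_norm \<eta>" using norms_of_in_J[OF A] max_col_norm_nonneg by (intro mult_right_mono) auto
  finally show ?thesis unfolding features_process_eq .
qed

lemma sum_square_coef_le:
  assumes "j < k"
  shows "(\<Sum>l<d. \<Sum>i<n. \<Sum>m\<in>M. (coef j l i m)\<^sup>2) \<le> 2 * real n * b\<^sup>2"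
proof -
  have "(\<Sum>j'<k. (if j' = j then v else 0)\<^sup>2) = v\<^sup>2" for v :: real
    using assms by (simp add: if_distrib[where f = "\<lambda>t. t\<^sup>2"] cong: if_cong)
  then have "(\<Sum>m\<in>M. (coef j l i m)\<^sup>2) = (x i l)\<^sup>2 + (x' i l)\<^sup>2" for l i
    unfolding coef_def sum_Plus_lessThan by simp
  hence "(\<Sum>l<d. \<Sum>i<n. \<Sum>m\<in>M. (coef j l i m)\<^sup>2) = (\<Sum>i<n. (vnorm d (x i))\<^sup>2 + (vnorm d (x' i))\<^sup>2)"
    by (simp add: vnorm_square sum.swap[of _ "{..<d}"] sum.distrib)
  also have "\<dots> \<le> (\<Sum>i<n. b\<^sup>2 + b\<^sup>2)"
    using xb vnorm_nonneg by (intro sum_mono add_mono power_mono) auto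
  finally show ?thesis by simp
qed

lemma rademacher_Fk_le:
  "rademacher n (Fk d k \<phi> x x' J)
    \<le> (1 / real n) * (2 * \<kappa> * a) * (exp 1 * sqrt (6 * ln (2 * real k) * (2 * real n * b\<^sup>2)))"
proof -
  define P where "P = PiE {..<n} (\<lambda>_. signs M)"
  have card: "card (signs {..<n}) = 2 ^ n" by (simp add: card_PiE numeral_2_eq_2)
  have J: "J \<noteq> {}" using zero_in_Jset[OF a0 a'0] by blast
  have "avg (signs {..<n}) (\<lambda>\<epsilon>. Sup ((\<lambda>A. 0 + (\<Sum>i\<in>{..<n}. \<epsilon> i * loss i A)) ` J))
      \<le> avg P (\<lambda>\<eta>. Sup ((\<lambda>A. 0 + 2 * (\<Sum>i\<in>{..<n}. \<Sum>m\<in>M. \<eta> i m * (\<kappa> * features i A m))) ` J))"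
    unfolding P_def
    by (rule vector_contraction)
      (auto simp: J bounded_const_comp bounded_loss bounded_mult_left_comp bounded_features loss_lipschitz)
  also have "\<dots> \<le> avg P (\<lambda>\<eta>. 2 * \<kappa> * a * max_col_norm \<eta>)"
  proof (intro avg_mono cSUP_least J)
    fix \<eta> A assume "A \<in> J"
    then have "\<kappa> * (\<Sum>i<n. \<Sum>m\<in>M. \<eta> i m * features i A m) \<le> \<kappa> * (a * max_col_norm \<eta>)"
      using \<kappa>_nonneg by (intro mult_left_mono features_process_le)
    moreover have "(\<Sum>i<n. \<Sum>m\<in>M. \<eta> i m * (\<kappa> * features i A m))
        = \<kappa> * (\<Sum>i<n. \<Sum>m\<in>M. \<eta> i m * features i A m)"
      by (simp add: sum_distrib_left mult_ac)
    ultimately show "0 + 2 * (\<Sum>i\<in>{..<n}. \<Sum>m\<in>M. \<eta> i m * (\<kappa> * features i A m)) \<le> 2 * \<kappa> * a * max_col_norm \<eta>"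
      by (simp add: mult_ac)
  qed
  also have "\<dots> = 2 * \<kappa> * a * avg P max_col_norm"
    by (rule avg_mult_left)
  also have "\<dots> \<le> 2 * \<kappa> * a * (exp 1 * sqrt (6 * ln (2 * real k) * (2 * real n * b\<^sup>2)))"
    unfolding P_def max_col_norm_def col_sum_def vnorm_def
    using \<kappa>_nonneg a0 k1 sum_square_coef_le
    by (intro mult_left_mono avg_Max_rademacher_norm_le[where y = coef]) auto
  finally have avg_bound: "avg (signs {..<n}) (\<lambda>\<epsilon>. Sup ((\<lambda>A. 0 + (\<Sum>i\<in>{..<n}. \<epsilon> i * loss i A)) ` J))
      \<le> 2 * \<kappa> * a * (exp 1 * sqrt (6 * ln (2 * real k) * (2 * real n * b\<^sup>2)))" .
  have "rademacher n (Fk d k \<phi> x x' J)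
      = (1 / real n) * avg (signs {..<n}) (\<lambda>\<epsilon>. Sup ((\<lambda>A. 0 + (\<Sum>i\<in>{..<n}. \<epsilon> i * loss i A)) ` J))"
    unfolding rademacher_def avg_def card Fk_def loss_def by (simp add: image_image)
  with avg_bound show ?thesis by (simp add: divide_right_mono mult.assoc)
qed

end

lemma explicit_bound_le:
  fixes n d k :: nat and L b a a' :: real
  assumes n: "1 \<le> n" and d: "1 \<le> d" and k: "1 \<le> k" and L: "0 \<le> L" and b: "0 \<le> b"
    and a: "0 \<le> a" and a': "0 \<le> a'"
  shows "(1 / real n) * (2 * (8 * L\<^sup>2 * a' * b / real k) * a)
           * (exp 1 * sqrt (6 * ln (2 * real k) * (2 * real n * b\<^sup>2)))
    \<le> 300 * (1 / real n + a * a' * b\<^sup>2 * L\<^sup>2 / (real k * sqrt (real n))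
                  * sqrt (ln (2 * real d * real k))
                  * ln (2 + real n * b\<^sup>2 * a'\<^sup>2 * L\<^sup>2 / real k))"
proof -
  define s where "s = sqrt (real n)"
  define Q where "Q = a * a' * b\<^sup>2 * L\<^sup>2 / (real k * s)"
  define l where "l = sqrt (ln (2 * real k))"
  have s: "s > 0" "real n = s\<^sup>2" unfolding s_def using n by simp_all
  have Q: "Q \<ge> 0" unfolding Q_def using a a' s by simp
  have l: "0 \<le> l" "l \<le> sqrt (ln (2 * real d * real k))"
    unfolding l_def using d k by (auto intro!: real_sqrt_le_mono mult_right_mono)
  have log_factor: "2/3 \<le> ln (2 + real n * b\<^sup>2 * a'\<^sup>2 * L\<^sup>2 / real k)"
    by (intro ln_ge_two_thirds) simp
  have "sqrt (6 * ln (2 * real k) * (2 * real n * b\<^sup>2)) = sqrt 12 * l * s * b"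
    unfolding l_def s_def using b by (simp add: real_sqrt_mult)
  then have "(1 / real n) * (2 * (8 * L\<^sup>2 * a' * b / real k) * a)
           * (exp 1 * sqrt (6 * ln (2 * real k) * (2 * real n * b\<^sup>2)))
      = (16 * exp 1 * sqrt 12) * (Q * l)"
    using s k unfolding Q_def by (simp add: field_simps power2_eq_square)
  also have "\<dots> \<le> 200 * (Q * l)"
  proof -
    have "sqrt 12 \<le> 4" using real_sqrt_le_mono[of 12 16] by simp
    then have "16 * exp 1 * sqrt 12 \<le> 16 * 3 * 4"
      using exp_le by (intro mult_mono) auto
    then show ?thesis using Q l by (intro mult_right_mono) auto
  qed
  also have "\<dots> = 300 * (Q * l * (2/3))" by simp
  also have "\<dots> \<le> 300 * (Q * sqrt (ln (2 * real d * real k)) * ln (2 + real n * b\<^sup>2 * a'\<^sup>2 * L\<^sup>2 / real k))"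
    using Q l log_factor order_trans[OF l] by (intro mult_left_mono mult_mono) auto
  also have "\<dots> \<le> 300 * (1 / real n + Q * sqrt (ln (2 * real d * real k))
                  * ln (2 + real n * b\<^sup>2 * a'\<^sup>2 * L\<^sup>2 / real k))"
    by simp
  finally show ?thesis unfolding Q_def s_def .
qed

theorem theorem1:
  shows "\<exists>C>0. \<forall>(n::nat) (d::nat) (k::nat) (\<phi>::real\<Rightarrow>real) (L::real) (b::real)
            (x::nat\<Rightarrow>nat\<Rightarrow>real) (x'::nat\<Rightarrow>nat\<Rightarrow>real) (a::real) (a'::real).
     1 \<le> n \<and> 1 \<le> d \<and> 1 \<le> k \<and> L-lipschitz_on UNIV \<phi> \<and> \<phi> 0 = 0 \<and> 0 < b \<and>
     (\<forall>i<n. vnorm d (x i) \<le> b \<and> vnorm d (x' i) \<le> b) \<and> 0 < a \<and> 0 < a'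
     \<longrightarrow> rademacher n (Fk d k \<phi> x x' (Jset d k a a'))
         \<le> C * (1 / real n + a * a' * b\<^sup>2 * L\<^sup>2 / (real k * sqrt (real n))
                  * sqrt (ln (2 * real d * real k))
                  * ln (2 + real n * b\<^sup>2 * a'\<^sup>2 * L\<^sup>2 / real k))"
proof (intro exI[of _ 300] conjI allI impI)
  fix n d k :: nat and \<phi> :: "real \<Rightarrow> real" and L b :: real and x x' :: "nat \<Rightarrow> nat \<Rightarrow> real"
    and a a' :: real
  assume h: "1 \<le> n \<and> 1 \<le> d \<and> 1 \<le> k \<and> L-lipschitz_on UNIV \<phi> \<and> \<phi> 0 = 0 \<and> 0 < b \<and>
     (\<forall>i<n. vnorm d (x i) \<le> b \<and> vnorm d (x' i) \<le> b) \<and> 0 < a \<and> 0 < a'"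
  then interpret Fk_setting n d k \<phi> L b x x' a a'
    by unfold_locales auto
  show "rademacher n (Fk d k \<phi> x x' (Jset d k a a'))
         \<le> 300 * (1 / real n + a * a' * b\<^sup>2 * L\<^sup>2 / (real k * sqrt (real n))
                  * sqrt (ln (2 * real d * real k))
                  * ln (2 + real n * b\<^sup>2 * a'\<^sup>2 * L\<^sup>2 / real k))"
    using rademacher_Fk_le explicit_bound_le[of n d k L b a a'] h L_nonneg unfolding \<kappa>_def by linarith
qed simp

end
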